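(* Let $\kappa\ge2$, $n\ge1$, $0\le u\le\kappa-1$ be integers and $0<\epsilon<1$. Define $\check q^{\{u\}}\in\mathbb{R}^{2^\kappa}$ by $\check q^{\{u\}}_i=0$ for $0\le i<2^u$ and $\check q^{\{u\}}_i=\frac{1}{2^\kappa-2^u}$ for $2^u\le i\le2^\kappa-1$. For each $(\kappa-1)$-dimensional subspace $S$ of $W$, define $\check q^{[S]}$ by $\check q^{[S]}_i=0$ if $\nu(i)\in S$ and $\check q^{[S]}_i=2^{1-\kappa}$ otherwise. Let $\mathcal{C}_u$ be the set of $q\in\mathbb{R}^{2^\kappa}$ such that: $q_0=0$; $q_i\ge0$ for all $i$; $\sum_iq_i=1$; $\|q-\bar q\|=\sqrt{\frac{2^u-1}{(2^\kappa-2^u)(2^\kappa-1)}}$ where $\bar q_0=0$, $\bar q_i=\frac{1}{2^\kappa-1}$ for $i\ge1$; and $\|q-\check q^{[S]}\|\ge\|\check q^{\{u\}}-\check q^{\{\kappa-1\}}\|$ for every $S\in\Xi(W,\kappa-1)$. Then $\check q^{\{u\}}\in\mathcal{C}_u$ and $\lambda(n,\epsilon,\check q^{\{u\}})\le\lambda(n,\epsilon,q)$ for all $q\in\mathcal{C}_u$.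
   Context: $W=\mathbb{F}_2^\kappa$; $\nu(i)\in W$ is the binary expansion of $i\in\{0,\dots,2^\kappa-1\}$ (so $\{\nu(i):i<2^u\}$ is a $u$-dimensional subspace); vectors $q$ are indexed $q_0,\dots,q_{2^\kappa-1}$, and $\|\cdot\|$ is the Euclidean norm (all vectors here have $0$-th coordinate $0$). For a subspace $S\subseteq W$, $\zeta(S,q)=\sum_{i:\nu(i)\in S}q_i$; $\Xi(W,\kappa-1)$ is the set of $(\kappa-1)$-dimensional subspaces of $W$. For real $q$ define $\lambda(n,\epsilon,q)=(2-\epsilon)^n2^{-\kappa}\Big(1+\sum_{S\in\Xi(W,\kappa-1)}\big(\tfrac{\epsilon}{2-\epsilon}\big)^{n(1-\zeta(S,q))}\Big)-1$ (the $\chi^2$ divergence between $p_{MZ}$ and $p_Mp_Z$ for the coset code over a binary erasure channel with erasure probability $\epsilon$, when $q$ is a generator matrix's column-distribution vector). $\check q^{\{u\}}$ is the subspace exclusion code excluding a $u$-dimensional subspace. *)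

theory Defs
  imports "HOL-Analysis.Analysis"
begin

text \<open>The vector space W = F_2^kappa, represented as the set of bit vectors
  (functions nat => bool) that vanish outside {0..<kappa}; addition is pointwise xor.\<close>

definition Wsp :: "nat \<Rightarrow> (nat \<Rightarrow> bool) set" where
  "Wsp \<kappa> = {v. \<forall>j. \<kappa> \<le> j \<longrightarrow> \<not> v j}"

definition vadd :: "(nat \<Rightarrow> bool) \<Rightarrow> (nat \<Rightarrow> bool) \<Rightarrow> (nat \<Rightarrow> bool)" where
  "vadd v w = (\<lambda>j. v j \<noteq> w j)"

definition vzero :: "nat \<Rightarrow> bool" where
  "vzero = (\<lambda>j. False)"

definition nu :: "nat \<Rightarrow> nat \<Rightarrow> (nat \<Rightarrow> bool)" where
  "nu \<kappa> i = (\<lambda>j. j < \<kappa> \<and> bit i j)"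

text \<open>Linear subspaces of W over F_2 (scalars 0,1: containing 0 and closed under addition).\<close>
definition is_subspace :: "nat \<Rightarrow> (nat \<Rightarrow> bool) set \<Rightarrow> bool" where
  "is_subspace \<kappa> S \<longleftrightarrow> S \<subseteq> Wsp \<kappa> \<and> vzero \<in> S \<and> (\<forall>v\<in>S. \<forall>w\<in>S. vadd v w \<in> S)"

text \<open>Xi(W,d): the d-dimensional subspaces (over F_2, dimension d iff 2^d elements).\<close>
definition Xi :: "nat \<Rightarrow> nat \<Rightarrow> (nat \<Rightarrow> bool) set set" where
  "Xi \<kappa> d = {S. is_subspace \<kappa> S \<and> card S = 2 ^ d}"

definition zeta :: "nat \<Rightarrow> (nat \<Rightarrow> bool) set \<Rightarrow> (nat \<Rightarrow> real) \<Rightarrow> real" where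
  "zeta \<kappa> S q = (\<Sum>i\<in>{i. i < 2 ^ \<kappa> \<and> nu \<kappa> i \<in> S}. q i)"

definition dist2k :: "nat \<Rightarrow> (nat \<Rightarrow> real) \<Rightarrow> (nat \<Rightarrow> real) \<Rightarrow> real" where
  "dist2k \<kappa> p q = sqrt (\<Sum>i<2 ^ \<kappa>. (p i - q i)\<^sup>2)"

definition lam :: "nat \<Rightarrow> nat \<Rightarrow> real \<Rightarrow> (nat \<Rightarrow> real) \<Rightarrow> real" where
  "lam \<kappa> n \<epsilon> q = (2 - \<epsilon>) ^ n * 2 powr (- real \<kappa>) *
     (1 + (\<Sum>S\<in>Xi \<kappa> (\<kappa> - 1). (\<epsilon> / (2 - \<epsilon>)) powr (real n * (1 - zeta \<kappa> S q)))) - 1"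

text \<open>Subspace exclusion code excluding the u-dimensional subspace {nu(i): i < 2^u}.\<close>
definition qcheck :: "nat \<Rightarrow> nat \<Rightarrow> (nat \<Rightarrow> real)" where
  "qcheck \<kappa> u = (\<lambda>i. if i < 2 ^ u then 0 else 1 / (2 ^ \<kappa> - 2 ^ u))"

definition qcheckS :: "nat \<Rightarrow> (nat \<Rightarrow> bool) set \<Rightarrow> (nat \<Rightarrow> real)" where
  "qcheckS \<kappa> S = (\<lambda>i. if nu \<kappa> i \<in> S then 0 else 2 powr (1 - real \<kappa>))"

definition qbar :: "nat \<Rightarrow> (nat \<Rightarrow> real)" where
  "qbar \<kappa> = (\<lambda>i. if i = 0 then 0 else 1 / (2 ^ \<kappa> - 1))"

definition Cset :: "nat \<Rightarrow> nat \<Rightarrow> (nat \<Rightarrow> real) set" where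
  "Cset \<kappa> u = {q. q 0 = 0 \<and> (\<forall>i<2 ^ \<kappa>. 0 \<le> q i) \<and> (\<Sum>i<2 ^ \<kappa>. q i) = 1 \<and>
      dist2k \<kappa> q (qbar \<kappa>) = sqrt ((2 ^ u - 1) / ((2 ^ \<kappa> - 2 ^ u) * (2 ^ \<kappa> - 1))) \<and>
      (\<forall>S\<in>Xi \<kappa> (\<kappa> - 1). dist2k \<kappa> q (qcheckS \<kappa> S) \<ge> dist2k \<kappa> (qcheck \<kappa> u) (qcheck \<kappa> (\<kappa> - 1)))}"

end

theory Submission
  imports Defs
begin

text \<open>Every hyperplane of W is the kernel of a character v \<mapsto> (-1)^(a.v) with a \<noteq> 0, and its
  q-mass is (1 + qhat(a)) / 2, where qhat is the Walsh transform of q. By Parseval, the sum and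
  the sum of squares of the hyperplane masses depend only on \<Sum>i. (q i)^2, which the distance
  constraint to qbar fixes. The distance constraints to the q^[S] say that every hyperplane mass
  is at least the smallest hyperplane mass L of q^{u}, and the hyperplane masses of q^{u} take only
  the values L and 1/2. Up to a positive affine change, \<lambda> is the sum of exp (c \<zeta>) over the
  hyperplanes; a parabola below z \<mapsto> exp (c z) on [L, \<infinity>) touching it at L and 1/2 has the same
  sum for every admissible q, so q^{u} minimises \<lambda>.\<close>

section \<open>Exponential bounds\<close>

lemma one_sub_mult_exp_le_one:
  fixes t :: real
  shows "(1 - t) * exp t \<le> 1"
proof -
  have "(1 - t) * exp t \<le> exp (- t) * exp t"
    using exp_ge_add_one_self[of "- t"] by (intro mult_right_mono) auto
  then show ?thesis by (simp add: exp_minus_inverse mult.commute)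
qed

lemma taylor2_ratio_deriv_numerator_nonpos:
  fixes t :: real
  assumes "t \<le> 0"
  shows "(t - 2) * exp t + t + 2 \<le> 0"
proof -
  have "(\<lambda>x. (x - 2) * exp x + x + 2) t \<le> (\<lambda>x. (x - 2) * exp x + x + 2) 0"
  proof (rule DERIV_nonneg_imp_nondecreasing[OF assms])
    fix x :: real
    have "((\<lambda>x. (x - 2) * exp x + x + 2) has_real_derivative (x - 1) * exp x + 1) (at x)"
      by (auto intro!: derivative_eq_intros simp: algebra_simps)
    moreover have "(x - 1) * exp x + 1 \<ge> 0"
      using one_sub_mult_exp_le_one[of x] by (simp add: algebra_simps)
    ultimately show "\<exists>y. ((\<lambda>x. (x - 2) * exp x + x + 2) has_real_derivative y) (at x) \<and> 0 \<le> y"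
      by blast
  qed
  then show ?thesis by simp
qed

lemma exp_le_taylor2_nonpos:
  fixes t :: real
  assumes "t \<le> 0"
  shows "exp t \<le> 1 + t + t\<^sup>2 / 2"
proof -
  have "(\<lambda>x. 1 + x + x\<^sup>2 / 2 - exp x) 0 \<le> (\<lambda>x. 1 + x + x\<^sup>2 / 2 - exp x) t"
  proof (rule DERIV_nonpos_imp_nonincreasing[OF assms])
    fix x :: real assume "t \<le> x" "x \<le> 0"
    then have "1 + x - exp x \<le> 0" using exp_ge_add_one_self[of x] by simp
    moreover have "((\<lambda>x. 1 + x + x\<^sup>2 / 2 - exp x) has_real_derivative 1 + x - exp x) (at x)"
      by (auto intro!: derivative_eq_intros)
    ultimately show "\<exists>y. ((\<lambda>x. 1 + x + x\<^sup>2 / 2 - exp x) has_real_derivative y) (at x) \<and> y \<le> 0"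
      by blast
  qed
  then show ?thesis by simp
qed

definition taylor2_ratio :: "real \<Rightarrow> real" where
  "taylor2_ratio t = (exp t - 1 - t) / t\<^sup>2"

lemma taylor2_ratio_mono_neg:
  fixes s t :: real
  assumes "s \<le> t" "t < 0"
  shows "taylor2_ratio s \<le> taylor2_ratio t"
  unfolding taylor2_ratio_def
proof (rule DERIV_nonneg_imp_nondecreasing[OF assms(1)])
  fix x assume "s \<le> x" "x \<le> t"
  then have x: "x < 0" using assms by simp
  have "((\<lambda>y. exp y - 1 - y) has_real_derivative exp x - 1) (at x)"
    and "((\<lambda>y. y\<^sup>2) has_real_derivative 2 * x) (at x)"
    by (auto intro!: derivative_eq_intros)
  from DERIV_quotient[OF this] x
  have "((\<lambda>y. (exp y - 1 - y) / y\<^sup>2) has_real_derivative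
          x * ((x - 2) * exp x + x + 2) / (x\<^sup>2)\<^sup>2) (at x)"
    by (simp add: algebra_simps power2_eq_square)
  moreover have "x * ((x - 2) * exp x + x + 2) / (x\<^sup>2)\<^sup>2 \<ge> 0"
    using taylor2_ratio_deriv_numerator_nonpos[of x] x by (simp add: mult_nonpos_nonpos)
  ultimately show "\<exists>y. ((\<lambda>y. (exp y - 1 - y) / y\<^sup>2) has_real_derivative y) (at x) \<and> 0 \<le> y"
    by blast
qed

text \<open>For \<open>s < 0\<close> the parabola \<open>1 + t + taylor2_ratio s * t\<^sup>2\<close> touches \<open>exp\<close> at \<open>t = s\<close> and
  \<open>t = 0\<close> and stays below it on \<open>[s, \<infinity>)\<close>.\<close>
lemma exp_ge_taylor2_ratio:
  fixes s t :: real
  assumes "s < 0" "s \<le> t"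
  shows "1 + t + taylor2_ratio s * t\<^sup>2 \<le> exp t"
proof (cases "t < 0")
  case True
  then have "taylor2_ratio s * t\<^sup>2 \<le> taylor2_ratio t * t\<^sup>2"
    using taylor2_ratio_mono_neg[OF assms(2)] by (simp add: mult_right_mono)
  also have "taylor2_ratio t * t\<^sup>2 = exp t - 1 - t"
    using True by (simp add: taylor2_ratio_def)
  finally show ?thesis by simp
next
  case False
  have "taylor2_ratio s \<le> 1 / 2"
    using exp_le_taylor2_nonpos[of s] assms by (simp add: taylor2_ratio_def divide_le_eq)
  then have "taylor2_ratio s * t\<^sup>2 \<le> 1 / 2 * t\<^sup>2" by (rule mult_right_mono) simp
  also have "\<dots> \<le> exp t - 1 - t" using exp_lower_Taylor_quadratic[of t] False by simp
  finally show ?thesis by simp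
qed

lemma sum_quadratic:
  fixes x :: "'a \<Rightarrow> real"
  shows "(\<Sum>a\<in>A. \<alpha> + \<beta> * x a + \<gamma> * (x a)\<^sup>2) =
    \<alpha> * card A + \<beta> * (\<Sum>a\<in>A. x a) + \<gamma> * (\<Sum>a\<in>A. (x a)\<^sup>2)"
  by (simp add: sum.distrib sum_distrib_left mult.commute)

text \<open>A parabola below \<open>\<lambda>z. exp (c * z)\<close> on \<open>[L, \<infinity>)\<close> that touches it at \<open>L\<close> and \<open>H\<close> has the
  same sum over both families, since these share their first two moments.\<close>
lemma sum_exp_two_point_le:
  fixes x y :: "'a \<Rightarrow> real" and c L H :: real
  assumes "c > 0" "L < H"
    and x_ge: "\<And>a. a \<in> A \<Longrightarrow> L \<le> x a"
    and y_two_point: "\<And>a. a \<in> A \<Longrightarrow> y a = L \<or> y a = H"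
    and sum_eq: "(\<Sum>a\<in>A. x a) = (\<Sum>a\<in>A. y a)"
    and sum_sq_eq: "(\<Sum>a\<in>A. (x a)\<^sup>2) = (\<Sum>a\<in>A. (y a)\<^sup>2)"
  shows "(\<Sum>a\<in>A. exp (c * y a)) \<le> (\<Sum>a\<in>A. exp (c * x a))"
proof -
  define E where "E = exp (c * H)"
  define s where "s = c * (L - H)"
  define r where "r = taylor2_ratio s"
  define p where "p z = E * (1 + c * (z - H) + r * (c * (z - H))\<^sup>2)" for z
  have s: "s < 0" using assms(1,2) by (simp add: s_def mult_pos_neg)
  have exp_shift: "exp (c * z) = E * exp (c * (z - H))" for z
    by (simp add: E_def flip: exp_add) (simp add: algebra_simps)
  have p_le: "p z \<le> exp (c * z)" if "L \<le> z" for z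
  proof -
    have "s \<le> c * (z - H)" using that assms(1) by (simp add: s_def mult_left_mono)
    then have "1 + c * (z - H) + r * (c * (z - H))\<^sup>2 \<le> exp (c * (z - H))"
      unfolding r_def by (rule exp_ge_taylor2_ratio[OF s])
    then show ?thesis unfolding p_def exp_shift[of z] by (simp add: E_def)
  qed
  have p_eq: "p z = exp (c * z)" if "z = L \<or> z = H" for z
  proof -
    have "r * s\<^sup>2 = exp s - 1 - s" using s by (simp add: r_def taylor2_ratio_def)
    then show ?thesis using that unfolding p_def exp_shift[of z] by (auto simp: s_def)
  qed
  have p_quadratic: "p z = E * (1 - c * H + r * c\<^sup>2 * H\<^sup>2) + E * (c - 2 * r * c\<^sup>2 * H) * z
      + E * r * c\<^sup>2 * z\<^sup>2" for z
    unfolding p_def power2_eq_square by (simp add: algebra_simps)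
  have "(\<Sum>a\<in>A. exp (c * y a)) = (\<Sum>a\<in>A. p (y a))"
    using y_two_point p_eq by (intro sum.cong) auto
  also have "\<dots> = (\<Sum>a\<in>A. p (x a))"
    unfolding p_quadratic sum_quadratic sum_eq sum_sq_eq ..
  also have "\<dots> \<le> (\<Sum>a\<in>A. exp (c * x a))"
    using x_ge p_le by (intro sum_mono) auto
  finally show ?thesis .
qed

section \<open>The space W and its characters\<close>

lemma Wsp_0: "Wsp 0 = {vzero}"
  by (auto simp: Wsp_def vzero_def)

lemma Wsp_Suc: "Wsp (Suc k) = Wsp k \<union> (\<lambda>v. v(k := True)) ` Wsp k"
proof (intro set_eqI iffI)
  fix v assume v: "v \<in> Wsp (Suc k)"
  show "v \<in> Wsp k \<union> (\<lambda>v. v(k := True)) ` Wsp k"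
  proof (cases "v k")
    case True
    then have "v = (v(k := False))(k := True)" by (simp add: fun_eq_iff)
    moreover have "v(k := False) \<in> Wsp k" using v by (auto simp: Wsp_def)
    ultimately show ?thesis by blast
  next
    case False
    then have "v \<in> Wsp k" using v by (auto simp: Wsp_def) (metis Suc_leI le_neq_implies_less)
    then show ?thesis by blast
  qed
qed (auto simp: Wsp_def)

lemma finite_Wsp: "finite (Wsp k)"
  by (induction k) (simp_all add: Wsp_Suc Wsp_0)

lemma Wsp_mono: "m \<le> k \<Longrightarrow> Wsp m \<subseteq> Wsp k"
  by (auto simp: Wsp_def)

lemma vzero_in_Wsp: "vzero \<in> Wsp k"
  by (simp add: vzero_def Wsp_def)

lemma vadd_in_Wsp: "v \<in> Wsp k \<Longrightarrow> w \<in> Wsp k \<Longrightarrow> vadd v w \<in> Wsp k"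
  by (auto simp: Wsp_def vadd_def)

lemma vadd_vadd_cancel: "vadd v (vadd v w) = w"
  by (auto simp: vadd_def)

lemma vadd_vadd_cancel_right: "vadd (vadd v w) w = v"
  by (auto simp: vadd_def)

lemma vadd_self [simp]: "vadd v v = vzero"
  by (simp add: vadd_def vzero_def)

lemma vadd_eq_vzero_iff: "vadd v w = vzero \<longleftrightarrow> v = w"
  by (auto simp: vadd_def vzero_def fun_eq_iff)

lemma Wsp_neq_vzero_iff: "v \<in> Wsp k \<Longrightarrow> v \<noteq> vzero \<longleftrightarrow> (\<exists>j<k. v j)"
  by (auto simp: Wsp_def vzero_def fun_eq_iff) (meson not_le)

lemma sum_Wsp_prod:
  fixes f :: "nat \<Rightarrow> bool \<Rightarrow> 'a::comm_semiring_1"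
  shows "(\<Sum>v\<in>Wsp k. \<Prod>j<k. f j (v j)) = (\<Prod>j<k. f j False + f j True)"
proof (induction k)
  case 0
  show ?case by (simp add: Wsp_0)
next
  case (Suc k)
  have disjoint: "Wsp k \<inter> (\<lambda>v. v(k := True)) ` Wsp k = {}"
    by (auto simp: Wsp_def)
  have "inj_on (\<lambda>v. v(k := True)) (Wsp k)"
    by (rule inj_onI) (auto simp: Wsp_def fun_eq_iff split: if_splits)
  then have "(\<Sum>v\<in>(\<lambda>v. v(k := True)) ` Wsp k. \<Prod>j<Suc k. f j (v j))
      = (\<Sum>v\<in>Wsp k. (\<Prod>j<k. f j (v j)) * f k True)"
    by (simp add: sum.reindex)
  moreover have "(\<Sum>v\<in>Wsp k. \<Prod>j<Suc k. f j (v j)) = (\<Sum>v\<in>Wsp k. (\<Prod>j<k. f j (v j)) * f k False)"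
    by (rule sum.cong) (auto simp: Wsp_def)
  ultimately show ?case
    unfolding Wsp_Suc using disjoint finite_Wsp
    by (simp add: sum.union_disjoint Suc.IH distrib_left flip: sum_distrib_right)
qed

lemma card_Wsp: "card (Wsp k) = 2 ^ k"
  using sum_Wsp_prod[of "\<lambda>_ _. 1::nat" k] by (simp add: numeral_2_eq_2)

definition walsh :: "nat \<Rightarrow> (nat \<Rightarrow> bool) \<Rightarrow> (nat \<Rightarrow> bool) \<Rightarrow> real" where
  "walsh k a v = (\<Prod>j<k. if a j \<and> v j then -1 else 1)"

lemma walsh_cases: "walsh k a v = 1 \<or> walsh k a v = -1"
  by (induction k) (auto simp: walsh_def)

lemma walsh_vadd: "walsh k a (vadd v w) = walsh k a v * walsh k a w"
  unfolding walsh_def vadd_def by (subst prod.distrib[symmetric]) (rule prod.cong, auto)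

lemma walsh_commute: "walsh k a v = walsh k v a"
  unfolding walsh_def by (rule prod.cong) auto

lemma walsh_vzero [simp]: "walsh k a vzero = 1" "walsh k vzero a = 1"
  by (auto simp: walsh_def vzero_def)

lemma walsh_unit:
  assumes "m < k"
  shows "walsh k a (\<lambda>j. j = m) = (if a m then -1 else 1)"
proof -
  have "walsh k a (\<lambda>j. j = m) = (\<Prod>j<k. if j = m then (if a m then -1 else 1) else 1)"
    unfolding walsh_def by (rule prod.cong) auto
  then show ?thesis using assms by simp
qed

lemma walsh_restrict: "v \<in> Wsp m \<Longrightarrow> m \<le> k \<Longrightarrow> walsh k a v = walsh m a v"
  unfolding walsh_def by (intro prod.mono_neutral_right) (auto simp: Wsp_def)

lemma sum_walsh: "(\<Sum>a\<in>Wsp k. walsh k a x) = (if \<forall>j<k. \<not> x j then 2 ^ k else 0)"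
proof -
  have "(\<Sum>a\<in>Wsp k. walsh k a x) = (\<Prod>j<k. 1 + (if x j then -1 else 1::real))"
    unfolding walsh_def using sum_Wsp_prod[of "\<lambda>j b. if b \<and> x j then -1 else 1::real" k] by simp
  also have "\<dots> = (if \<forall>j<k. \<not> x j then 2 ^ k else 0)"
    by (auto intro: prod_zero)
  finally show ?thesis .
qed

lemma sum_walsh_Wsp: "x \<in> Wsp k \<Longrightarrow> (\<Sum>a\<in>Wsp k. walsh k a x) = (if x = vzero then 2 ^ k else 0)"
  using Wsp_neq_vzero_iff[of x k] by (auto simp: sum_walsh vzero_def)

lemma sum_walsh_nonzero: "a \<in> Wsp k \<Longrightarrow> a \<noteq> vzero \<Longrightarrow> (\<Sum>v\<in>Wsp k. walsh k a v) = 0"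
  using sum_walsh_Wsp[of a k] by (simp add: walsh_commute[of k a])

definition hyperplane :: "nat \<Rightarrow> (nat \<Rightarrow> bool) \<Rightarrow> (nat \<Rightarrow> bool) set" where
  "hyperplane k a = {v \<in> Wsp k. walsh k a v = 1}"

lemma hyperplane_in_Xi:
  assumes a: "a \<in> Wsp k" "a \<noteq> vzero"
  shows "hyperplane k a \<in> Xi k (k - 1)"
proof -
  obtain j where "j < k" using Wsp_neq_vzero_iff[OF a(1)] a(2) by blast
  have "real (card (hyperplane k a)) = (\<Sum>v\<in>Wsp k. if walsh k a v = 1 then 1 else 0)"
    unfolding hyperplane_def using finite_Wsp by (simp add: sum.inter_filter[symmetric])
  also have "\<dots> = (\<Sum>v\<in>Wsp k. (1 + walsh k a v) / 2)"
    by (rule sum.cong) (use walsh_cases in fastforce)+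
  also have "\<dots> = 2 ^ (k - 1)"
    using sum_walsh_nonzero[OF a] \<open>j < k\<close>
    by (simp add: sum_divide_distrib[symmetric] sum.distrib card_Wsp power_diff)
  finally have "card (hyperplane k a) = 2 ^ (k - 1)"
    by (metis of_nat_eq_of_nat_power_cancel_iff of_nat_numeral)
  moreover have "is_subspace k (hyperplane k a)"
    unfolding is_subspace_def hyperplane_def by (auto simp: vzero_in_Wsp vadd_in_Wsp walsh_vadd)
  ultimately show ?thesis by (simp add: Xi_def)
qed

lemma inj_on_hyperplane: "inj_on (hyperplane k) (Wsp k)"
proof (rule inj_onI)
  fix a b assume ab: "a \<in> Wsp k" "b \<in> Wsp k" "hyperplane k a = hyperplane k b"
  show "a = b"
  proof
    fix j show "a j = b j"
    proof (cases "j < k")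
      case True
      then have "(\<lambda>i. i = j) \<in> Wsp k" by (auto simp: Wsp_def)
      then have "(\<lambda>i. i = j) \<in> hyperplane k c \<longleftrightarrow> \<not> c j" for c
        using True by (simp add: hyperplane_def walsh_unit)
      from this[of a] this[of b] show ?thesis using ab(3) by simp
    next
      case False then show ?thesis using ab by (auto simp: Wsp_def)
    qed
  qed
qed

text \<open>\<open>v + S\<close> has as many elements as the complement of \<open>S\<close> and lies in it.\<close>
lemma vadd_notin_half_subspace:
  assumes S: "is_subspace k S" "card S = 2 ^ (k - 1)" and k: "k \<ge> 1"
    and v: "v \<in> Wsp k - S" and w: "w \<in> Wsp k - S"
  shows "vadd v w \<in> S"
proof -
  have sub: "S \<subseteq> Wsp k" and closed: "\<And>x y. x \<in> S \<Longrightarrow> y \<in> S \<Longrightarrow> vadd x y \<in> S"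
    using S(1) by (auto simp: is_subspace_def)
  have "(2::nat) ^ k = 2 * 2 ^ (k - 1)"
    using k by (cases k) auto
  then have "card (Wsp k - S) = 2 ^ (k - 1)"
    using card_Diff_subset[OF finite_subset[OF sub finite_Wsp] sub] S(2) by (simp add: card_Wsp)
  moreover have "vadd v ` S \<subseteq> Wsp k - S"
  proof
    fix x assume "x \<in> vadd v ` S"
    then obtain s where s: "s \<in> S" "x = vadd v s" by blast
    then have "x \<in> S \<Longrightarrow> v \<in> S" using closed[of x s] by (simp add: vadd_vadd_cancel_right)
    then show "x \<in> Wsp k - S" using s v sub by (auto intro: vadd_in_Wsp)
  qed
  moreover have "inj_on (vadd v) S"
    by (metis inj_onI vadd_vadd_cancel)
  ultimately have "vadd v ` S = Wsp k - S"
    using S(2) finite_Wsp by (intro card_subset_eq) (auto simp: card_image)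
  then obtain s where "s \<in> S" "w = vadd v s" using w by blast
  then show ?thesis by (simp add: vadd_vadd_cancel)
qed

lemma additive_predicate_eq_walsh:
  assumes additive: "\<And>v w. v \<in> Wsp k \<Longrightarrow> w \<in> Wsp k \<Longrightarrow> P (vadd v w) \<longleftrightarrow> (P v \<longleftrightarrow> P w)"
    and v: "v \<in> Wsp k"
  shows "P v \<longleftrightarrow> walsh k (\<lambda>j. j < k \<and> \<not> P (\<lambda>i. i = j)) v = 1"
proof -
  define a where "a = (\<lambda>j. j < k \<and> \<not> P (\<lambda>i. i = j))"
  have "P vzero"
    using additive[OF vzero_in_Wsp vzero_in_Wsp] by simp
  have "m \<le> k \<longrightarrow> (\<forall>v\<in>Wsp m. P v \<longleftrightarrow> walsh k a v = 1)" for m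
  proof (induction m)
    case 0
    show ?case using \<open>P vzero\<close> by (simp add: Wsp_0)
  next
    case (Suc m)
    show ?case
    proof (intro impI ballI)
      fix v assume m: "Suc m \<le> k" and "v \<in> Wsp (Suc m)"
      then consider "v \<in> Wsp m" | w where "w \<in> Wsp m" "v = w(m := True)"
        unfolding Wsp_Suc by blast
      then show "P v \<longleftrightarrow> walsh k a v = 1"
      proof cases
        case 1
        then show ?thesis using Suc.IH m by simp
      next
        case (2 w)
        define e where "e = (\<lambda>i::nat. i = m)"
        have wk: "w \<in> Wsp k" and ek: "e \<in> Wsp k"
          using 2 m Wsp_mono[of m k] by (auto simp: e_def Wsp_def)
        have "v = vadd w e" using 2 by (auto simp: e_def vadd_def Wsp_def)
        moreover have "walsh k a e = (if P e then 1 else -1)"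
          using m by (simp add: e_def walsh_unit a_def)
        ultimately have "walsh k a v = (if P e then walsh k a w else - walsh k a w)"
          by (simp add: walsh_vadd)
        moreover have "P v \<longleftrightarrow> (P w \<longleftrightarrow> P e)"
          using additive[OF wk ek] \<open>v = vadd w e\<close> by simp
        moreover have "P w \<longleftrightarrow> walsh k a w = 1"
          using Suc.IH m 2(1) by simp
        ultimately show ?thesis using walsh_cases[of k a w] by auto
      qed
    qed
  qed
  from this[of k] show ?thesis using v by (simp add: a_def)
qed

lemma Xi_hyperplane:
  assumes k: "k \<ge> 1" and S: "S \<in> Xi k (k - 1)"
  obtains a where "a \<in> Wsp k" "a \<noteq> vzero" "S = hyperplane k a"
proof -
  have subspace: "is_subspace k S" and card_S: "card S = 2 ^ (k - 1)"
    using S by (auto simp: Xi_def)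
  then have sub: "S \<subseteq> Wsp k" and closed: "\<And>x y. x \<in> S \<Longrightarrow> y \<in> S \<Longrightarrow> vadd x y \<in> S"
    by (auto simp: is_subspace_def)
  have "vadd v w \<in> S \<longleftrightarrow> (v \<in> S \<longleftrightarrow> w \<in> S)" if "v \<in> Wsp k" "w \<in> Wsp k" for v w
  proof -
    have "w \<in> S" if "v \<in> S" "vadd v w \<in> S"
      using closed[OF that] by (simp add: vadd_vadd_cancel)
    moreover have "v \<in> S" if "vadd v w \<in> S" "w \<in> S"
      using closed[OF that] by (simp add: vadd_vadd_cancel_right)
    ultimately show ?thesis
      using closed[of v w] vadd_notin_half_subspace[OF subspace card_S k, of v w] that by blast
  qed
  note walsh_eq = additive_predicate_eq_walsh[of k "\<lambda>v. v \<in> S", OF this]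
  define a where "a = (\<lambda>j. j < k \<and> (\<lambda>i. i = j) \<notin> S)"
  have a: "a \<in> Wsp k" by (auto simp: a_def Wsp_def)
  have S_eq: "S = hyperplane k a"
  proof (intro set_eqI)
    fix v
    show "v \<in> S \<longleftrightarrow> v \<in> hyperplane k a"
      using walsh_eq[of v] sub unfolding hyperplane_def a_def by blast
  qed
  moreover have "a \<noteq> vzero"
  proof
    assume "a = vzero"
    then have "S = Wsp k" using S_eq by (auto simp: hyperplane_def)
    then show False using card_S k by (simp add: card_Wsp)
  qed
  ultimately show thesis using a that by blast
qed

lemma Xi_eq_hyperplanes:
  assumes k: "k \<ge> 1"
  shows "Xi k (k - 1) = hyperplane k ` (Wsp k - {vzero})"
proof (intro subset_antisym subsetI)
  fix S assume "S \<in> Xi k (k - 1)"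
  then obtain a where "a \<in> Wsp k" "a \<noteq> vzero" "S = hyperplane k a"
    by (rule Xi_hyperplane[OF k])
  then show "S \<in> hyperplane k ` (Wsp k - {vzero})" by blast
qed (blast intro: hyperplane_in_Xi)

lemma sum_Xi_eq_sum_hyperplanes:
  "k \<ge> 1 \<Longrightarrow> (\<Sum>S\<in>Xi k (k - 1). g S) = (\<Sum>a\<in>Wsp k - {vzero}. g (hyperplane k a))"
  unfolding Xi_eq_hyperplanes by (subst sum.reindex) (auto intro: inj_on_subset[OF inj_on_hyperplane])

section \<open>Binary expansions and the Walsh transform\<close>

lemma bit_imp_less: "(i::nat) < 2 ^ k \<Longrightarrow> bit i j \<Longrightarrow> j < k"
  by (metis bit_take_bit_iff take_bit_nat_eq_self_iff)

lemma nu_in_Wsp: "nu k i \<in> Wsp k"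
  by (auto simp: nu_def Wsp_def)

lemma inj_on_nu: "inj_on (nu k) {..<2 ^ k}"
proof (rule inj_onI)
  fix i j assume ij: "i \<in> {..<2 ^ k}" "j \<in> {..<2 ^ k}" "nu k i = nu k j"
  show "i = j"
  proof (rule bit_eqI)
    fix n
    show "bit i n = bit j n"
      using fun_cong[OF ij(3), of n] bit_imp_less[of i k n] bit_imp_less[of j k n] ij(1,2)
      by (auto simp: nu_def)
  qed
qed

lemma bij_betw_nu: "bij_betw (nu k) {..<2 ^ k} (Wsp k)"
proof -
  have "nu k ` {..<2 ^ k} = Wsp k"
    by (rule card_subset_eq) (use finite_Wsp nu_in_Wsp card_Wsp card_image[OF inj_on_nu] in auto)
  then show ?thesis using inj_on_nu by (simp add: bij_betw_def)
qed

lemma nu_0: "nu k 0 = vzero"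
  by (simp add: nu_def vzero_def)

lemma nu_eq_vzero_iff: "i < 2 ^ k \<Longrightarrow> nu k i = vzero \<longleftrightarrow> i = 0"
  using inj_onD[OF inj_on_nu[of k], of i 0] nu_0[of k] by auto

lemma nu_restrict: "i < 2 ^ u \<Longrightarrow> u \<le> k \<Longrightarrow> nu k i = nu u i"
  using bit_imp_less[of i u] by (force simp: nu_def fun_eq_iff)

lemma nu_in_Wsp_iff:
  assumes "i < 2 ^ k" "u \<le> k"
  shows "nu k i \<in> Wsp u \<longleftrightarrow> i < 2 ^ u"
proof
  assume "nu k i \<in> Wsp u"
  then obtain j where "j < 2 ^ u" "nu k i = nu u j"
    using bij_betw_nu[of u] by (auto simp: bij_betw_def)
  moreover have "j < 2 ^ k"
    using \<open>j < 2 ^ u\<close> assms(2) by (meson less_le_trans one_le_numeral power_increasing)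
  ultimately show "i < 2 ^ u"
    using inj_onD[OF inj_on_nu[of k], of i j] assms nu_restrict[of j u k] by auto
qed (use assms nu_restrict nu_in_Wsp in metis)

lemma sum_nu: "(\<Sum>i<2 ^ k. g (nu k i)) = (\<Sum>v\<in>Wsp k. g v)"
  using sum.reindex_bij_betw[OF bij_betw_nu, of g] by simp

lemma card_nu_preimage:
  assumes "S \<subseteq> Wsp k"
  shows "card {i. i < 2 ^ k \<and> nu k i \<in> S} = card S"
proof -
  have "nu k ` {i. i < 2 ^ k \<and> nu k i \<in> S} = S"
    using assms bij_betw_nu[of k] by (auto simp: bij_betw_def)
  moreover have "inj_on (nu k) {i. i < 2 ^ k \<and> nu k i \<in> S}"
    by (rule inj_on_subset[OF inj_on_nu]) auto
  ultimately show ?thesis by (metis card_image)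
qed

definition walsh_coeff :: "nat \<Rightarrow> (nat \<Rightarrow> real) \<Rightarrow> (nat \<Rightarrow> bool) \<Rightarrow> real" where
  "walsh_coeff k q a = (\<Sum>i<2 ^ k. q i * walsh k a (nu k i))"

lemma walsh_coeff_vzero: "walsh_coeff k q vzero = (\<Sum>i<2 ^ k. q i)"
  by (simp add: walsh_coeff_def)

lemma sum_walsh_coeff: "(\<Sum>a\<in>Wsp k. walsh_coeff k q a) = 2 ^ k * q 0"
proof -
  have "(\<Sum>a\<in>Wsp k. walsh_coeff k q a) = (\<Sum>i<2 ^ k. q i * (\<Sum>a\<in>Wsp k. walsh k a (nu k i)))"
    unfolding walsh_coeff_def by (subst sum.swap) (simp add: sum_distrib_left)
  also have "\<dots> = (\<Sum>i<(2::nat) ^ k. if i = 0 then 2 ^ k * q 0 else 0)"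
    by (rule sum.cong) (auto simp: sum_walsh_Wsp nu_in_Wsp nu_eq_vzero_iff)
  finally show ?thesis by simp
qed

lemma sum_walsh_coeff_sq: "(\<Sum>a\<in>Wsp k. (walsh_coeff k q a)\<^sup>2) = 2 ^ k * (\<Sum>i<2 ^ k. (q i)\<^sup>2)"
proof -
  have "(\<Sum>a\<in>Wsp k. (walsh_coeff k q a)\<^sup>2) =
      (\<Sum>i<2 ^ k. \<Sum>j<2 ^ k. q i * q j * (\<Sum>a\<in>Wsp k. walsh k a (vadd (nu k i) (nu k j))))"
    unfolding walsh_coeff_def power2_eq_square sum_product walsh_vadd
    by (simp add: sum.swap[of _ "Wsp k"] sum_distrib_left algebra_simps)
  also have "\<dots> = (\<Sum>i<(2::nat) ^ k. \<Sum>j<(2::nat) ^ k. if j = i then 2 ^ k * (q i)\<^sup>2 else 0)"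
  proof (intro sum.cong refl)
    fix i j assume "i \<in> {..<(2::nat) ^ k}" "j \<in> {..<(2::nat) ^ k}"
    then have "vadd (nu k i) (nu k j) = vzero \<longleftrightarrow> j = i"
      using inj_onD[OF inj_on_nu[of k], of i j] by (auto simp: vadd_eq_vzero_iff)
    then show "q i * q j * (\<Sum>a\<in>Wsp k. walsh k a (vadd (nu k i) (nu k j))) =
        (if j = i then 2 ^ k * (q i)\<^sup>2 else 0)"
      by (simp add: sum_walsh_Wsp vadd_in_Wsp nu_in_Wsp power2_eq_square)
  qed
  finally show ?thesis by (simp add: sum_distrib_left)
qed

lemma zeta_hyperplane:
  "zeta k (hyperplane k a) q = ((\<Sum>i<2 ^ k. q i) + walsh_coeff k q a) / 2"
proof -
  have "zeta k (hyperplane k a) q = (\<Sum>i<2 ^ k. if walsh k a (nu k i) = 1 then q i else 0)"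
    unfolding zeta_def hyperplane_def using nu_in_Wsp
    by (subst sum.inter_filter[symmetric]) (auto intro: sum.cong)
  also have "\<dots> = (\<Sum>i<2 ^ k. (q i + q i * walsh k a (nu k i)) / 2)"
    by (rule sum.cong) (use walsh_cases in fastforce)+
  finally show ?thesis
    by (simp add: walsh_coeff_def sum_divide_distrib[symmetric] sum.distrib)
qed

lemma
  assumes q0: "q 0 = 0" and q_sum: "(\<Sum>i<2 ^ k. q i) = 1"
  shows sum_zeta_hyperplanes: "(\<Sum>a\<in>Wsp k - {vzero}. zeta k (hyperplane k a) q) = (2 ^ k - 2) / 2"
    and sum_zeta_hyperplanes_sq: "(\<Sum>a\<in>Wsp k - {vzero}. (zeta k (hyperplane k a) q)\<^sup>2) =
          (2 ^ k - 4 + 2 ^ k * (\<Sum>i<2 ^ k. (q i)\<^sup>2)) / 4"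
proof -
  define A where "A = Wsp k - {vzero}"
  have card_A: "real (card A) = 2 ^ k - 1"
    by (simp add: A_def card_Wsp vzero_in_Wsp finite_Wsp)
  have zeta_eq: "zeta k (hyperplane k a) q = (1 + walsh_coeff k q a) / 2" for a
    by (simp add: zeta_hyperplane q_sum)
  have sum_coeff: "(\<Sum>a\<in>A. walsh_coeff k q a) = -1"
    using sum.remove[OF finite_Wsp[of k] vzero_in_Wsp[of k], of "walsh_coeff k q"]
    by (simp add: A_def sum_walsh_coeff walsh_coeff_vzero q0 q_sum)
  have sum_coeff_sq: "(\<Sum>a\<in>A. (walsh_coeff k q a)\<^sup>2) = 2 ^ k * (\<Sum>i<2 ^ k. (q i)\<^sup>2) - 1"
    using sum.remove[OF finite_Wsp[of k] vzero_in_Wsp[of k], of "\<lambda>a. (walsh_coeff k q a)\<^sup>2"]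
    by (simp add: A_def sum_walsh_coeff_sq walsh_coeff_vzero q_sum)
  show "(\<Sum>a\<in>Wsp k - {vzero}. zeta k (hyperplane k a) q) = (2 ^ k - 2) / 2"
    unfolding A_def[symmetric] zeta_eq using sum_coeff card_A
    by (simp add: sum_divide_distrib[symmetric] sum.distrib)
  have "(\<Sum>a\<in>A. (zeta k (hyperplane k a) q)\<^sup>2)
      = (\<Sum>a\<in>A. (1 + 2 * walsh_coeff k q a + (walsh_coeff k q a)\<^sup>2) / 4)"
    unfolding zeta_eq by (simp add: power2_eq_square algebra_simps)
  also have "\<dots> = (card A + 2 * (\<Sum>a\<in>A. walsh_coeff k q a) + (\<Sum>a\<in>A. (walsh_coeff k q a)\<^sup>2)) / 4"
    by (simp add: sum_divide_distrib[symmetric] sum.distrib sum_distrib_left)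
  finally show "(\<Sum>a\<in>Wsp k - {vzero}. (zeta k (hyperplane k a) q)\<^sup>2) =
      (2 ^ k - 4 + 2 ^ k * (\<Sum>i<2 ^ k. (q i)\<^sup>2)) / 4"
    unfolding A_def[symmetric] sum_coeff sum_coeff_sq card_A by simp
qed

lemma lam_eq_sum_hyperplanes:
  assumes k: "k \<ge> 1" and \<epsilon>: "0 < \<epsilon>" "\<epsilon> < 2" and c: "c = real n * ln ((2 - \<epsilon>) / \<epsilon>)"
  shows "lam k n \<epsilon> q = (2 - \<epsilon>) ^ n * 2 powr (- real k) *
    (1 + exp (- c) * (\<Sum>a\<in>Wsp k - {vzero}. exp (c * zeta k (hyperplane k a) q))) - 1"
proof -
  have "(\<epsilon> / (2 - \<epsilon>)) powr (real n * (1 - z)) = exp (- c) * exp (c * z)" for z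
    using \<epsilon> by (simp add: powr_def ln_div c algebra_simps flip: exp_add)
  then show ?thesis
    unfolding lam_def sum_Xi_eq_sum_hyperplanes[OF k] by (simp add: sum_distrib_left)
qed

section \<open>Distances\<close>

lemma sum_lessThan_if_less:
  fixes g :: "nat \<Rightarrow> 'a::ab_group_add"
  assumes "n \<le> m"
  shows "(\<Sum>i<m. if i < n then 0 else g i) = (\<Sum>i<m. g i) - (\<Sum>i<n. g i)"
proof -
  have "(\<Sum>i<m. if i < n then 0 else g i) = sum g {n..<m}"
    by (rule sum.mono_neutral_cong_right) auto
  moreover have "sum g {..<m} = sum g {..<n} + sum g {n..<m}"
    using assms by (simp add: lessThan_atLeast0 sum.atLeastLessThan_concat)
  ultimately show ?thesis by simp
qed

lemma dist2k_sq: "(dist2k k p q)\<^sup>2 = (\<Sum>i<2 ^ k. (p i - q i)\<^sup>2)"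
  unfolding dist2k_def by (simp add: sum_nonneg)

lemma dist2k_le_iff: "dist2k k p q \<le> dist2k k p' q' \<longleftrightarrow> (dist2k k p q)\<^sup>2 \<le> (dist2k k p' q')\<^sup>2"
  by (simp add: dist2k_def sum_nonneg)

lemma dist2k_qbar_sq:
  assumes k: "k \<ge> 1" and q0: "q 0 = 0" and q_sum: "(\<Sum>i<2 ^ k. q i) = 1"
  shows "(dist2k k q (qbar k))\<^sup>2 = (\<Sum>i<2 ^ k. (q i)\<^sup>2) - 1 / (2 ^ k - 1)"
proof -
  define N :: real where "N = 2 ^ k - 1"
  have N: "N > 0" using k by (simp add: N_def)
  have "(dist2k k q (qbar k))\<^sup>2 =
      (\<Sum>i<2 ^ k. (q i)\<^sup>2 - 2 / N * q i + (if i < 1 then 0 else 1 / N\<^sup>2))"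
    unfolding dist2k_sq
    by (rule sum.cong) (auto simp: qbar_def N_def q0 power2_eq_square algebra_simps)
  also have "\<dots> = (\<Sum>i<2 ^ k. (q i)\<^sup>2) - 2 / N + (2 ^ k - 1) / N\<^sup>2"
    using sum_lessThan_if_less[of 1 "2 ^ k" "\<lambda>_. 1 / N\<^sup>2"]
    by (simp add: sum.distrib sum_subtractf q_sum diff_divide_distrib
        flip: sum_distrib_left sum_divide_distrib)
  also have "(2 ^ k - 1) / N\<^sup>2 = 1 / N" using N by (simp add: N_def power2_eq_square)
  finally show ?thesis by (simp add: N_def)
qed

lemma dist2k_qcheckS_sq:
  assumes S: "S \<subseteq> Wsp k" "card S = 2 ^ (k - 1)" and k: "k \<ge> 1"
    and q_sum: "(\<Sum>i<2 ^ k. q i) = 1"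
  shows "(dist2k k q (qcheckS k S))\<^sup>2 =
    (\<Sum>i<2 ^ k. (q i)\<^sup>2) + 2 powr (1 - real k) * (2 * zeta k S q - 1)"
proof -
  define c :: real where "c = 2 powr (1 - real k)"
  define T where "T = {i. i < 2 ^ k \<and> nu k i \<in> S}"
  have T: "T \<subseteq> {..<2 ^ k}" "card T = 2 ^ (k - 1)"
    using card_nu_preimage[OF S(1)] S(2) by (auto simp: T_def)
  have pow: "(2::nat) ^ k = 2 * 2 ^ (k - 1)" "(2::real) ^ k = 2 * 2 ^ (k - 1)"
    using k by (cases k; simp)+
  have c_sq: "c\<^sup>2 * 2 ^ (k - 1) = c"
    using pow(2) by (simp add: c_def powr_diff powr_realpow power2_eq_square)
  have "(dist2k k q (qcheckS k S))\<^sup>2 =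
      (\<Sum>i<2 ^ k. (q i)\<^sup>2 + (if i \<in> T then 0 else c\<^sup>2 - 2 * c * q i))"
    unfolding dist2k_sq
    by (rule sum.cong) (auto simp: qcheckS_def T_def c_def power2_eq_square algebra_simps)
  also have "\<dots> = (\<Sum>i<2 ^ k. (q i)\<^sup>2) + (\<Sum>i\<in>{..<2 ^ k} - T. c\<^sup>2 - 2 * c * q i)"
    by (simp add: sum.distrib sum.If_cases Diff_eq Int_commute)
  also have "(\<Sum>i\<in>{..<2 ^ k} - T. c\<^sup>2 - 2 * c * q i) = c\<^sup>2 * 2 ^ (k - 1) - 2 * c * (1 - zeta k S q)"
  proof -
    have "card ({..<2 ^ k} - T) = 2 ^ (k - 1)"
      using T pow(1) by (simp add: card_Diff_subset finite_subset)
    moreover have "zeta k S q = sum q T" by (simp add: zeta_def T_def)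
    ultimately show ?thesis
      using T(1) by (simp add: sum_subtractf sum_diff q_sum flip: sum_distrib_left)
  qed
  finally show ?thesis unfolding c_sq by (simp add: c_def algebra_simps)
qed

section \<open>The subspace exclusion code\<close>

definition qcheck_zeta_low :: "nat \<Rightarrow> nat \<Rightarrow> real" where
  "qcheck_zeta_low k u = (2 ^ (k - 1) - 2 ^ u) / (2 ^ k - 2 ^ u)"

context
  fixes k u :: nat
  assumes u_less: "u < k"
begin

lemma pow_u_less_pow_k: "(2::real) ^ u < 2 ^ k"
  using u_less by (simp add: power_strict_increasing)

lemma sum_qcheck: "(\<Sum>i<2 ^ k. qcheck k u i) = 1"
proof -
  have "(2::real) ^ k - 2 ^ u \<noteq> 0" using pow_u_less_pow_k by simp
  then show ?thesis
    using sum_lessThan_if_less[of "2 ^ u" "2 ^ k" "\<lambda>_. 1 / (2 ^ k - 2 ^ u) :: real"] u_less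
    by (simp add: qcheck_def power_increasing flip: diff_divide_distrib)
qed

lemma sum_qcheck_sq: "(\<Sum>i<2 ^ k. (qcheck k u i)\<^sup>2) = 1 / (2 ^ k - 2 ^ u)"
proof -
  have "(qcheck k u i)\<^sup>2 = (if i < 2 ^ u then 0 else 1 / (2 ^ k - 2 ^ u)\<^sup>2)" for i
    by (simp add: qcheck_def power_divide)
  then have "(\<Sum>i<2 ^ k. (qcheck k u i)\<^sup>2) = (2 ^ k - 2 ^ u) / (2 ^ k - 2 ^ u)\<^sup>2"
    using sum_lessThan_if_less[of "2 ^ u" "2 ^ k" "\<lambda>_. 1 / (2 ^ k - 2 ^ u)\<^sup>2 :: real"] u_less
    by (simp add: power_increasing diff_divide_distrib)
  then show ?thesis using pow_u_less_pow_k by (simp add: power2_eq_square)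
qed

lemma qcheck_zeta_low_less_half: "qcheck_zeta_low k u < 1 / 2"
  using pow_u_less_pow_k u_less by (simp add: qcheck_zeta_low_def field_simps power_diff)

text \<open>Only the first \<open>2 ^ u\<close> indices see the character; its sum over them is \<open>2 ^ u\<close> or \<open>0\<close>.\<close>
lemma zeta_hyperplane_qcheck:
  assumes a: "a \<in> Wsp k" "a \<noteq> vzero"
  shows "zeta k (hyperplane k a) (qcheck k u) \<in> {qcheck_zeta_low k u, 1 / 2}"
proof -
  define M :: real where "M = 2 ^ k - 2 ^ u"
  define s where "s = (\<Sum>i<2 ^ u. walsh k a (nu k i))"
  have "walsh_coeff k (qcheck k u) a = (\<Sum>i<2 ^ k. if i < 2 ^ u then 0 else walsh k a (nu k i) / M)"
    unfolding walsh_coeff_def by (rule sum.cong) (auto simp: qcheck_def M_def)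
  also have "\<dots> = ((\<Sum>i<2 ^ k. walsh k a (nu k i)) - s) / M"
    using u_less by (simp add: sum_lessThan_if_less power_increasing s_def diff_divide_distrib
        sum_divide_distrib)
  also have "(\<Sum>i<2 ^ k. walsh k a (nu k i)) = 0"
    using sum_walsh_nonzero[OF a] by (simp add: sum_nu)
  finally have coeff: "walsh_coeff k (qcheck k u) a = - s / M" by simp
  have "s = (\<Sum>i<2 ^ u. walsh u a (nu u i))"
    unfolding s_def
  proof (intro sum.cong refl)
    fix i :: nat assume "i \<in> {..<2 ^ u}"
    then show "walsh k a (nu k i) = walsh u a (nu u i)"
      using nu_restrict[of i u k] walsh_restrict[OF nu_in_Wsp[of u i], of k a] u_less by simp
  qed
  also have "\<dots> = (\<Sum>v\<in>Wsp u. walsh u v a)"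
    by (simp add: sum_nu walsh_commute)
  finally have "s = 2 ^ u \<or> s = 0" by (simp add: sum_walsh)
  moreover have "zeta k (hyperplane k a) (qcheck k u) = (1 - s / M) / 2"
    by (simp add: zeta_hyperplane sum_qcheck coeff)
  moreover have "(1 - 2 ^ u / M) / 2 = qcheck_zeta_low k u"
  proof -
    have "M > 0" using pow_u_less_pow_k by (simp add: M_def)
    moreover have "(2::real) ^ k = 2 * 2 ^ (k - 1)" using u_less by (cases k) auto
    ultimately show ?thesis by (simp add: qcheck_zeta_low_def M_def field_simps)
  qed
  ultimately show ?thesis by auto
qed

lemma dist2k_qcheck_top_sq:
  "(dist2k k (qcheck k u) (qcheck k (k - 1)))\<^sup>2 =
    1 / (2 ^ k - 2 ^ u) + 2 powr (1 - real k) * (2 * qcheck_zeta_low k u - 1)"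
proof -
  have k: "k \<ge> 1" and km: "k - 1 \<le> k" using u_less by auto
  have pow: "(2::real) ^ k = 2 * 2 ^ (k - 1)" using k by (cases k) auto
  have nu_top: "nu k i \<in> Wsp (k - 1) \<longleftrightarrow> i < 2 ^ (k - 1)" if "i < 2 ^ k" for i
    using nu_in_Wsp_iff[OF that km] .
  have "qcheck k (k - 1) i = qcheckS k (Wsp (k - 1)) i" if "i < 2 ^ k" for i
    using nu_top[OF that] pow by (simp add: qcheck_def qcheckS_def powr_diff powr_realpow)
  then have "dist2k k (qcheck k u) (qcheck k (k - 1)) = dist2k k (qcheck k u) (qcheckS k (Wsp (k - 1)))"
    unfolding dist2k_def by (intro arg_cong[where f = sqrt] sum.cong) auto
  moreover have "zeta k (Wsp (k - 1)) (qcheck k u) = qcheck_zeta_low k u"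
  proof -
    have "i < 2 ^ k" if "i < 2 ^ (k - 1)" for i :: nat
      using that km by (meson less_le_trans one_le_numeral power_increasing)
    then have "{i. i < 2 ^ k \<and> nu k i \<in> Wsp (k - 1)} = {..<2 ^ (k - 1)}"
      using nu_top by auto
    then have "zeta k (Wsp (k - 1)) (qcheck k u) = (\<Sum>i<2 ^ (k - 1). qcheck k u i)"
      by (simp add: zeta_def)
    also have "\<dots> = qcheck_zeta_low k u"
      using sum_lessThan_if_less[of "2 ^ u" "2 ^ (k - 1)" "\<lambda>_. 1 / (2 ^ k - 2 ^ u) :: real"] u_less
      by (simp add: qcheck_def power_increasing qcheck_zeta_low_def diff_divide_distrib)
    finally show ?thesis .
  qed
  ultimately show ?thesis
    using dist2k_qcheckS_sq[OF Wsp_mono[OF km] _ k sum_qcheck] sum_qcheck_sq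
    by (simp add: card_Wsp)
qed

lemma qcheck_dist_condition_iff:
  assumes S: "S \<in> Xi k (k - 1)"
    and q_sum: "(\<Sum>i<2 ^ k. q i) = 1" and q_sq: "(\<Sum>i<2 ^ k. (q i)\<^sup>2) = 1 / (2 ^ k - 2 ^ u)"
  shows "dist2k k (qcheck k u) (qcheck k (k - 1)) \<le> dist2k k q (qcheckS k S) \<longleftrightarrow>
    qcheck_zeta_low k u \<le> zeta k S q"
proof -
  have "S \<subseteq> Wsp k" "card S = 2 ^ (k - 1)" "k \<ge> 1"
    using S u_less by (auto simp: Xi_def is_subspace_def)
  note dist_q = dist2k_qcheckS_sq[OF this q_sum]
  show ?thesis
    unfolding dist2k_le_iff dist2k_qcheck_top_sq dist_q q_sq by simp
qed

lemma dist2k_qbar_eq_iff: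
  assumes q0: "q 0 = 0" and q_sum: "(\<Sum>i<2 ^ k. q i) = 1"
  shows "dist2k k q (qbar k) = sqrt ((2 ^ u - 1) / ((2 ^ k - 2 ^ u) * (2 ^ k - 1))) \<longleftrightarrow>
    (\<Sum>i<2 ^ k. (q i)\<^sup>2) = 1 / (2 ^ k - 2 ^ u)"
proof -
  define D :: real where "D = (2 ^ u - 1) / ((2 ^ k - 2 ^ u) * (2 ^ k - 1))"
  have k: "k \<ge> 1" using u_less by simp
  have pows: "(1::real) \<le> 2 ^ u" "(2::real) ^ u < 2 ^ k" "(1::real) < 2 ^ k"
    using pow_u_less_pow_k by auto
  then have "D \<ge> 0" by (simp add: D_def)
  then have "dist2k k q (qbar k) = sqrt D \<longleftrightarrow> (dist2k k q (qbar k))\<^sup>2 = D"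
    by (auto simp: dist2k_def sum_nonneg)
  moreover have "(2::real) ^ k - 2 ^ u \<noteq> 0" "(2::real) ^ k - 1 \<noteq> 0"
    using pows(2,3) by linarith+
  then have "D = 1 / (2 ^ k - 2 ^ u) - 1 / (2 ^ k - 1)"
    by (simp add: D_def field_simps)
  ultimately show ?thesis
    unfolding D_def[symmetric] dist2k_qbar_sq[OF k q0 q_sum] by auto
qed

lemma mem_Cset_iff:
  "q \<in> Cset k u \<longleftrightarrow> q 0 = 0 \<and> (\<forall>i<2 ^ k. 0 \<le> q i) \<and> (\<Sum>i<2 ^ k. q i) = 1 \<and>
    (\<Sum>i<2 ^ k. (q i)\<^sup>2) = 1 / (2 ^ k - 2 ^ u) \<and>
    (\<forall>a\<in>Wsp k - {vzero}. qcheck_zeta_low k u \<le> zeta k (hyperplane k a) q)"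
proof -
  have k: "k \<ge> 1" using u_less by simp
  have "(\<forall>S\<in>Xi k (k - 1). dist2k k (qcheck k u) (qcheck k (k - 1)) \<le> dist2k k q (qcheckS k S))
      \<longleftrightarrow> (\<forall>a\<in>Wsp k - {vzero}. qcheck_zeta_low k u \<le> zeta k (hyperplane k a) q)"
    if "(\<Sum>i<2 ^ k. q i) = 1" "(\<Sum>i<2 ^ k. (q i)\<^sup>2) = 1 / (2 ^ k - 2 ^ u)"
    using qcheck_dist_condition_iff[OF _ that] hyperplane_in_Xi
    unfolding Xi_eq_hyperplanes[OF k] by auto
  then show ?thesis
    unfolding Cset_def using dist2k_qbar_eq_iff by auto
qed

lemma qcheck_in_Cset: "qcheck k u \<in> Cset k u"
proof -
  have "qcheck_zeta_low k u \<le> zeta k (hyperplane k a) (qcheck k u)" if "a \<in> Wsp k - {vzero}" for a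
    using zeta_hyperplane_qcheck[of a] qcheck_zeta_low_less_half that by auto
  moreover have "0 \<le> qcheck k u i" for i
    using pow_u_less_pow_k by (simp add: qcheck_def)
  moreover have "qcheck k u 0 = 0" by (simp add: qcheck_def)
  ultimately show ?thesis
    unfolding mem_Cset_iff using sum_qcheck sum_qcheck_sq by blast
qed

lemma lam_qcheck_le:
  assumes n: "n \<ge> 1" and \<epsilon>: "0 < \<epsilon>" "\<epsilon> < 1" and q: "q \<in> Cset k u"
  shows "lam k n \<epsilon> (qcheck k u) \<le> lam k n \<epsilon> q"
proof -
  define c where "c = real n * ln ((2 - \<epsilon>) / \<epsilon>)"
  define A where "A = Wsp k - {vzero}"
  have k: "k \<ge> 1" using u_less by simp
  have "c > 0" using n \<epsilon> by (simp add: c_def)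
  have q_props: "q 0 = 0" "(\<Sum>i<2 ^ k. q i) = 1" "(\<Sum>i<2 ^ k. (q i)\<^sup>2) = 1 / (2 ^ k - 2 ^ u)"
      "\<And>a. a \<in> A \<Longrightarrow> qcheck_zeta_low k u \<le> zeta k (hyperplane k a) q"
    using q unfolding mem_Cset_iff A_def by auto
  have qcheck_props: "qcheck k u 0 = 0" "(\<Sum>i<2 ^ k. qcheck k u i) = 1"
      "(\<Sum>i<2 ^ k. (qcheck k u i)\<^sup>2) = 1 / (2 ^ k - 2 ^ u)"
    using qcheck_in_Cset unfolding mem_Cset_iff by auto
  have "(\<Sum>a\<in>A. exp (c * zeta k (hyperplane k a) (qcheck k u)))
      \<le> (\<Sum>a\<in>A. exp (c * zeta k (hyperplane k a) q))"
  proof (rule sum_exp_two_point_le[OF \<open>c > 0\<close> qcheck_zeta_low_less_half])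
    show "zeta k (hyperplane k a) (qcheck k u) = qcheck_zeta_low k u \<or>
        zeta k (hyperplane k a) (qcheck k u) = 1 / 2" if "a \<in> A" for a
      using zeta_hyperplane_qcheck that by (auto simp: A_def)
    show "(\<Sum>a\<in>A. zeta k (hyperplane k a) q) = (\<Sum>a\<in>A. zeta k (hyperplane k a) (qcheck k u))"
      unfolding A_def sum_zeta_hyperplanes[OF q_props(1,2)]
        sum_zeta_hyperplanes[OF qcheck_props(1,2)] ..
    show "(\<Sum>a\<in>A. (zeta k (hyperplane k a) q)\<^sup>2) =
        (\<Sum>a\<in>A. (zeta k (hyperplane k a) (qcheck k u))\<^sup>2)"
      unfolding A_def sum_zeta_hyperplanes_sq[OF q_props(1,2)]
        sum_zeta_hyperplanes_sq[OF qcheck_props(1,2)] q_props(3) qcheck_props(3) ..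
  qed (use q_props(4) in auto)
  moreover have "\<epsilon> < 2" using \<epsilon> by simp
  ultimately show ?thesis
    unfolding lam_eq_sum_hyperplanes[OF k \<epsilon>(1) \<open>\<epsilon> < 2\<close> c_def] A_def
    by (simp add: mult_left_mono)
qed

end

theorem theorem9:
  fixes \<kappa> n u :: nat and \<epsilon> :: real
  assumes "\<kappa> \<ge> 2" and "n \<ge> 1" and "u \<le> \<kappa> - 1" and "0 < \<epsilon>" and "\<epsilon> < 1"
  shows "qcheck \<kappa> u \<in> Cset \<kappa> u \<and> (\<forall>q\<in>Cset \<kappa> u. lam \<kappa> n \<epsilon> (qcheck \<kappa> u) \<le> lam \<kappa> n \<epsilon> q)"
proof -
  have "u < \<kappa>" using assms(1,3) by linarith
  then show ?thesis
    using qcheck_in_Cset lam_qcheck_le assms(2,4,5) by blast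
qed

end
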